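(* Let $k\ge 3$ be an integer, let $n\ge 2^{15k^2}$ be a multiple of $2k$, and let $p=20n^{-2/k}$. Let $G=G(n,p)$ be the random graph on $n$ labeled vertices in which each pair of vertices is an edge independently with probability $p$. Then: (a) the expected number of cliques of size $k+1$ in $G$ is at most $20^{\binom{k+1}{2}}$; (b) with probability more than $\frac{2}{3}$, every induced subgraph of $G$ with $\frac{n}{2k}$ vertices contains a clique of size $k$. *)

theory Defs
  imports "HOL-Probability.Probability"
begin

text \<open>Vertex set of G(n,p) is {0..<n}; a graph is given by its set of edges,
  each edge being a 2-element subset of the vertex set.\<close>

definition vertex_pairs :: "nat \<Rightarrow> nat set set" where
  "vertex_pairs n = {e. e \<subseteq> {..<n} \<and> card e = 2}"

definition gnp :: "nat \<Rightarrow> real \<Rightarrow> nat set set pmf" where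
  "gnp n p = map_pmf (\<lambda>f. {e \<in> vertex_pairs n. f e})
              (Pi_pmf (vertex_pairs n) False (\<lambda>_. bernoulli_pmf p))"

definition is_clique :: "nat set set \<Rightarrow> nat set \<Rightarrow> bool" where
  "is_clique E S \<longleftrightarrow> (\<forall>e. e \<subseteq> S \<and> card e = 2 \<longrightarrow> e \<in> E)"

definition num_cliques :: "nat \<Rightarrow> nat set set \<Rightarrow> nat \<Rightarrow> nat" where
  "num_cliques n E m = card {S. S \<subseteq> {..<n} \<and> card S = m \<and> is_clique E S}"

end

theory Submission
  imports Defs
begin

text \<open>Part (a) is a first-moment computation. For part (b), fix a set \<open>U\<close> of \<open>m = n/(2k)\<close>
  vertices and apply Janson's inequality to the events "the \<open>k\<close>-subset \<open>S\<close> of \<open>U\<close> spans a clique".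
  With \<open>t = n powr (1/k)\<close> and \<open>p = 20/t\<^sup>2\<close>, the expected number \<open>\<mu>\<close> of such cliques is at least \<open>5n/4\<close>,
  while the correlation term \<open>\<Delta>\<close>, grouped by the size \<open>j\<close> of the overlap of two \<open>k\<close>-sets, is
  at most \<open>n/4\<close>. Hence \<open>U\<close> misses all \<open>k\<close>-cliques with probability at most \<open>exp (-n)\<close>, and a union
  bound over the at most \<open>2\<^sup>n\<close> choices of \<open>U\<close> finishes the proof.

  Janson's inequality itself is proved for the product Bernoulli measure on the subsets of a
  finite set, from the Harris inequality, by the classical induction on the number of events.\<close>

definition bern_weight :: "real \<Rightarrow> 'a set \<Rightarrow> 'a set \<Rightarrow> real" where
  "bern_weight p P E = (\<Prod>x\<in>P. if x \<in> E then p else 1 - p)"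

definition bern_prob :: "real \<Rightarrow> 'a set \<Rightarrow> 'a set set \<Rightarrow> real" where
  "bern_prob p P X = (\<Sum>E\<in>Pow P. if E \<in> X then bern_weight p P E else 0)"

lemma sum_Pow_insert:
  assumes "finite P" "a \<notin> P"
  shows "(\<Sum>E\<in>Pow (insert a P). h E) = (\<Sum>E\<in>Pow P. h E) + (\<Sum>E\<in>Pow P. h (insert a E))"
proof -
  have "inj_on (insert a) (Pow P)"
    using assms(2) by (intro inj_onI) (metis PowD insert_absorb insert_ident subset_iff)
  moreover have "Pow P \<inter> insert a ` Pow P = {}"
    using assms(2) by auto
  ultimately show ?thesis
    unfolding Pow_insert using assms(1) by (simp add: sum.union_disjoint sum.reindex)
qed

lemma bern_weight_nonneg: "0 \<le> p \<Longrightarrow> p \<le> 1 \<Longrightarrow> 0 \<le> bern_weight p P E"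
  unfolding bern_weight_def by (intro prod_nonneg) auto

lemma bern_weight_insert:
  assumes "finite P" "a \<notin> P" "E \<subseteq> P"
  shows "bern_weight p (insert a P) E = (1 - p) * bern_weight p P E"
    and "bern_weight p (insert a P) (insert a E) = p * bern_weight p P E"
proof -
  have "(\<Prod>x\<in>P. if x \<in> insert a E then p else 1 - p) = (\<Prod>x\<in>P. if x \<in> E then p else 1 - p)"
    using assms by (intro prod.cong) auto
  then show "bern_weight p (insert a P) (insert a E) = p * bern_weight p P E"
    using assms unfolding bern_weight_def by (subst prod.insert) auto
qed (use assms in \<open>auto simp: bern_weight_def\<close>)

lemma bern_prob_insert:
  assumes "finite P" "a \<notin> P"
  shows "bern_prob p (insert a P) X
           = (1 - p) * bern_prob p P X + p * bern_prob p P {E. insert a E \<in> X}"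
proof -
  have "bern_prob p (insert a P) X
      = (\<Sum>E\<in>Pow P. (1 - p) * (if E \<in> X then bern_weight p P E else 0))
      + (\<Sum>E\<in>Pow P. p * (if insert a E \<in> X then bern_weight p P E else 0))"
    unfolding bern_prob_def sum_Pow_insert[OF assms]
    using assms by (intro arg_cong2[where f="(+)"] sum.cong) (auto simp: bern_weight_insert)
  then show ?thesis
    unfolding bern_prob_def by (simp add: sum_distrib_left)
qed

lemma bern_prob_empty: "bern_prob p {} X = (if {} \<in> X then 1 else 0)"
  unfolding bern_prob_def bern_weight_def by simp

lemma bern_prob_nonneg: "0 \<le> p \<Longrightarrow> p \<le> 1 \<Longrightarrow> 0 \<le> bern_prob p P X"
  unfolding bern_prob_def by (intro sum_nonneg) (auto simp: bern_weight_nonneg)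

lemma bern_prob_mono:
  "0 \<le> p \<Longrightarrow> p \<le> 1 \<Longrightarrow> X \<inter> Pow P \<subseteq> Y \<Longrightarrow> bern_prob p P X \<le> bern_prob p P Y"
  unfolding bern_prob_def by (intro sum_mono) (auto simp: bern_weight_nonneg)

lemma bern_prob_cong:
  "(\<And>E. E \<subseteq> P \<Longrightarrow> E \<in> X \<longleftrightarrow> E \<in> Y) \<Longrightarrow> bern_prob p P X = bern_prob p P Y"
  unfolding bern_prob_def by (intro sum.cong) auto

lemma bern_prob_eq_0: "(\<And>E. E \<subseteq> P \<Longrightarrow> E \<notin> X) \<Longrightarrow> bern_prob p P X = 0"
  unfolding bern_prob_def by (intro sum.neutral) auto

lemma bern_prob_UNIV: "finite P \<Longrightarrow> bern_prob p P UNIV = 1"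
  by (induction P rule: finite_induct) (simp_all add: bern_prob_empty bern_prob_insert)

lemma bern_prob_split: "bern_prob p P X = bern_prob p P (X \<inter> Y) + bern_prob p P (X - Y)"
  unfolding bern_prob_def sum.distrib[symmetric] by (intro sum.cong) auto

lemma bern_prob_subadditive:
  assumes "0 \<le> p" "p \<le> 1" "X \<inter> Pow P \<subseteq> Y \<union> Z"
  shows "bern_prob p P X \<le> bern_prob p P Y + bern_prob p P Z"
  unfolding bern_prob_def sum.distrib[symmetric]
  using assms bern_weight_nonneg[OF assms(1,2)] by (intro sum_mono) auto

lemma bern_prob_UN_le:
  assumes "0 \<le> p" "p \<le> 1" "finite I"
  shows "bern_prob p P (\<Union>i\<in>I. Z i) \<le> (\<Sum>i\<in>I. bern_prob p P (Z i))"
  using assms(3)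
proof (induction I rule: finite_induct)
  case empty
  then show ?case by (simp add: bern_prob_def)
next
  case (insert i I)
  have "bern_prob p P (\<Union>i\<in>insert i I. Z i) \<le> bern_prob p P (Z i) + bern_prob p P (\<Union>i\<in>I. Z i)"
    by (rule bern_prob_subadditive[OF assms(1,2)]) auto
  then show ?case using insert by simp
qed

lemma harris_inequality:
  assumes "finite P" "0 \<le> p" "p \<le> 1"
    and "\<And>E E'. E \<subseteq> E' \<Longrightarrow> E' \<subseteq> P \<Longrightarrow> E \<in> X \<Longrightarrow> E' \<in> X"
    and "\<And>E E'. E \<subseteq> E' \<Longrightarrow> E' \<subseteq> P \<Longrightarrow> E' \<in> Y \<Longrightarrow> E \<in> Y"
  shows "bern_prob p P (X \<inter> Y) \<le> bern_prob p P X * bern_prob p P Y"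
  using assms(1,4,5)
proof (induction P arbitrary: X Y rule: finite_induct)
  case empty
  then show ?case by (simp add: bern_prob_empty)
next
  case (insert a P)
  define X1 where "X1 = {E. insert a E \<in> X}"
  define Y1 where "Y1 = {E. insert a E \<in> Y}"
  define x0 x1 y0 y1 where "x0 = bern_prob p P X" and "x1 = bern_prob p P X1"
    and "y0 = bern_prob p P Y" and "y1 = bern_prob p P Y1"
  have IH0: "bern_prob p P (X \<inter> Y) \<le> x0 * y0"
    unfolding x0_def y0_def by (rule insert.IH) (meson insert.prems subset_insertI2)+
  have IH1: "bern_prob p P (X1 \<inter> Y1) \<le> x1 * y1"
    unfolding x1_def y1_def X1_def Y1_def
  proof (rule insert.IH)
    fix E E' assume "E \<subseteq> E'" "E' \<subseteq> P"
    then have "insert a E \<subseteq> insert a E'" "insert a E' \<subseteq> insert a P" by auto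
    then show "E \<in> {E. insert a E \<in> X} \<Longrightarrow> E' \<in> {E. insert a E \<in> X}"
      and "E' \<in> {E. insert a E \<in> Y} \<Longrightarrow> E \<in> {E. insert a E \<in> Y}"
      using insert.prems(1)[of "insert a E" "insert a E'"]
        insert.prems(2)[of "insert a E" "insert a E'"] by auto
  qed
  have "x0 \<le> x1" unfolding x0_def x1_def X1_def
    using insert.prems(1)[of _ "insert a _"] by (intro bern_prob_mono[OF assms(2,3)]) auto
  moreover have "y1 \<le> y0" unfolding y0_def y1_def Y1_def
    using insert.prems(2)[of _ "insert a _"] by (intro bern_prob_mono[OF assms(2,3)]) auto
  ultimately have cov: "0 \<le> p * (1 - p) * ((x1 - x0) * (y0 - y1))"
    using assms by (intro mult_nonneg_nonneg) auto
  have "{E. insert a E \<in> X \<inter> Y} = X1 \<inter> Y1" by (auto simp: X1_def Y1_def)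
  then have "bern_prob p (insert a P) (X \<inter> Y)
      = (1 - p) * bern_prob p P (X \<inter> Y) + p * bern_prob p P (X1 \<inter> Y1)"
    by (simp add: bern_prob_insert[OF insert.hyps])
  also have "\<dots> \<le> (1 - p) * (x0 * y0) + p * (x1 * y1)"
    using IH0 IH1 assms by (intro add_mono mult_left_mono) auto
  also have "\<dots> = ((1 - p) * x0 + p * x1) * ((1 - p) * y0 + p * y1)
                  - p * (1 - p) * ((x1 - x0) * (y0 - y1))"
    by (simp add: algebra_simps)
  also have "\<dots> \<le> ((1 - p) * x0 + p * x1) * ((1 - p) * y0 + p * y1)"
    using cov by linarith
  also have "\<dots> = bern_prob p (insert a P) X * bern_prob p (insert a P) Y"
    by (simp add: bern_prob_insert[OF insert.hyps] x0_def x1_def y0_def y1_def X1_def Y1_def)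
  finally show ?case .
qed

lemma bern_prob_superset_Int_indep:
  assumes "finite P" "A \<subseteq> P" "\<And>E. E \<subseteq> P \<Longrightarrow> E \<in> D \<longleftrightarrow> E - A \<in> D"
  shows "bern_prob p P ({E. A \<subseteq> E} \<inter> D) = p ^ card A * bern_prob p P D"
  using assms
proof (induction P arbitrary: A D rule: finite_induct)
  case empty
  then show ?case by (simp add: bern_prob_empty)
next
  case (insert a P)
  define D1 where "D1 = {E. insert a E \<in> D}"
  have D1_iff: "E \<in> D1 \<longleftrightarrow> insert a E - A \<in> D" if "E \<subseteq> P" for E
    using insert.prems(2)[of "insert a E"] that by (auto simp: D1_def)
  show ?case
  proof (cases "a \<in> A")
    case True
    have "bern_prob p P ({E. A \<subseteq> E} \<inter> D) = 0"
      by (rule bern_prob_eq_0) (use True insert.hyps in auto)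
    moreover have "{E. insert a E \<in> {E. A \<subseteq> E} \<inter> D} = {E. A - {a} \<subseteq> E} \<inter> D1"
      using True by (auto simp: D1_def)
    moreover have "bern_prob p P ({E. A - {a} \<subseteq> E} \<inter> D1) = p ^ card (A - {a}) * bern_prob p P D1"
    proof (rule insert.IH)
      fix E assume E: "E \<subseteq> P"
      have "insert a E - A = insert a (E - (A - {a})) - A" using True by auto
      then show "E \<in> D1 \<longleftrightarrow> E - (A - {a}) \<in> D1"
        using D1_iff[of E] D1_iff[of "E - (A - {a})"] E by (metis Diff_subset subset_trans)
    qed (use insert.prems in auto)
    moreover have "bern_prob p P D1 = bern_prob p P D"
    proof (rule bern_prob_cong)
      fix E assume "E \<subseteq> P"
      moreover have "insert a E - A = E - A" using True by auto
      ultimately show "E \<in> D1 \<longleftrightarrow> E \<in> D"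
        using D1_iff insert.prems(2)[of E] by auto
    qed
    moreover have "card A = Suc (card (A - {a}))"
      using True insert.prems(1) insert.hyps(1) by (metis card_Suc_Diff1 finite_insert finite_subset)
    ultimately show ?thesis
      by (simp add: bern_prob_insert[OF insert.hyps] D1_def[symmetric] algebra_simps)
  next
    case False
    have A: "A \<subseteq> P" using insert.prems(1) False by auto
    have "bern_prob p P ({E. A \<subseteq> E} \<inter> D) = p ^ card A * bern_prob p P D"
      by (rule insert.IH[OF A]) (use insert.prems(2) in auto)
    moreover have "bern_prob p P ({E. A \<subseteq> E} \<inter> D1) = p ^ card A * bern_prob p P D1"
    proof (rule insert.IH[OF A])
      fix E assume E: "E \<subseteq> P"
      have "insert a E - A = insert a (E - A)" using False by auto
      then show "E \<in> D1 \<longleftrightarrow> E - A \<in> D1"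
        using D1_iff[OF E] by (simp add: D1_def)
    qed
    moreover have "{E. insert a E \<in> {E. A \<subseteq> E} \<inter> D} = {E. A \<subseteq> E} \<inter> D1"
      using False by (auto simp: D1_def)
    ultimately show ?thesis
      by (simp add: bern_prob_insert[OF insert.hyps] D1_def[symmetric] algebra_simps)
  qed
qed

lemma bern_prob_superset:
  "finite P \<Longrightarrow> A \<subseteq> P \<Longrightarrow> bern_prob p P {E. A \<subseteq> E} = p ^ card A"
  using bern_prob_superset_Int_indep[of P A UNIV p] by (simp add: bern_prob_UNIV)

lemma bern_prob_superset_Int_down_closed_le:
  assumes "finite P" "0 \<le> p" "p \<le> 1" "A \<subseteq> P"
    and "\<And>E E'. E \<subseteq> E' \<Longrightarrow> E' \<subseteq> P \<Longrightarrow> E' \<in> D \<Longrightarrow> E \<in> D"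
  shows "bern_prob p P ({E. A \<subseteq> E} \<inter> D) \<le> p ^ card A * bern_prob p P D"
proof -
  have "bern_prob p P ({E. A \<subseteq> E} \<inter> D) \<le> bern_prob p P {E. A \<subseteq> E} * bern_prob p P D"
    by (rule harris_inequality) (use assms in auto)
  then show ?thesis
    using bern_prob_superset[OF assms(1,4)] by simp
qed

text \<open>Independence gives \<open>P(A x \<subseteq> E, D) = p\<^bsup>|A x|\<^esup> P(D)\<close>, while by the Harris inequality
  each event \<open>A y\<close> overlapping \<open>A x\<close> removes at most \<open>p\<^bsup>|A x \<union> A y|\<^esup> P(D)\<close> from it.\<close>

lemma janson_hit_lower_bound:
  fixes A :: "'b \<Rightarrow> 'a set"
  assumes P: "finite P" and p: "0 \<le> p" "p \<le> 1" and F: "finite F"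
    and A: "A x \<subseteq> P" "\<forall>y\<in>F. A y \<subseteq> P"
  defines "D \<equiv> {E. \<forall>y\<in>F. A y \<inter> A x = {} \<longrightarrow> \<not> A y \<subseteq> E}"
  shows "(p ^ card (A x) - (\<Sum>y\<in>{y\<in>F. A x \<inter> A y \<noteq> {}}. p ^ card (A x \<union> A y))) * bern_prob p P D
           \<le> bern_prob p P ({E. \<forall>y\<in>F. \<not> A y \<subseteq> E} \<inter> {E. A x \<subseteq> E})"
proof -
  define N where "N = {y\<in>F. A x \<inter> A y \<noteq> {}}"
  have D_down: "E \<in> D" if "E \<subseteq> E'" "E' \<in> D" for E E'
    using that unfolding D_def by blast
  have "p ^ card (A x) * bern_prob p P D = bern_prob p P ({E. A x \<subseteq> E} \<inter> D)"
  proof (rule bern_prob_superset_Int_indep[OF P A(1), symmetric])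
    fix E assume "E \<subseteq> P"
    have "A y \<subseteq> E \<longleftrightarrow> A y \<subseteq> E - A x" if "A y \<inter> A x = {}" for y
      using that by auto
    then show "E \<in> D \<longleftrightarrow> E - A x \<in> D" unfolding D_def by auto
  qed
  also have "\<dots> \<le> bern_prob p P ({E. \<forall>y\<in>F. \<not> A y \<subseteq> E} \<inter> {E. A x \<subseteq> E})
                 + bern_prob p P (\<Union>y\<in>N. {E. A x \<union> A y \<subseteq> E} \<inter> D)"
    by (rule bern_prob_subadditive[OF p]) (auto simp: D_def N_def Int_commute)
  also have "bern_prob p P (\<Union>y\<in>N. {E. A x \<union> A y \<subseteq> E} \<inter> D)
      \<le> (\<Sum>y\<in>N. bern_prob p P ({E. A x \<union> A y \<subseteq> E} \<inter> D))"
    using F by (intro bern_prob_UN_le[OF p]) (simp add: N_def)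
  also have "\<dots> \<le> (\<Sum>y\<in>N. p ^ card (A x \<union> A y) * bern_prob p P D)"
    using A D_down unfolding N_def
    by (intro sum_mono bern_prob_superset_Int_down_closed_le[OF P p]) auto
  also have "\<dots> = (\<Sum>y\<in>N. p ^ card (A x \<union> A y)) * bern_prob p P D"
    by (rule sum_distrib_right[symmetric])
  finally show ?thesis
    unfolding N_def by (simp add: left_diff_distrib)
qed

lemma janson_step:
  fixes A :: "'b \<Rightarrow> 'a set"
  assumes P: "finite P" and p: "0 \<le> p" "p \<le> 1" and F: "finite F"
    and A: "A x \<subseteq> P" "\<forall>y\<in>F. A y \<subseteq> P"
  shows "bern_prob p P {E. \<forall>y\<in>insert x F. \<not> A y \<subseteq> E}
           \<le> bern_prob p P {E. \<forall>y\<in>F. \<not> A y \<subseteq> E}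
             * (1 - p ^ card (A x) + (\<Sum>y\<in>{y\<in>F. A x \<inter> A y \<noteq> {}}. p ^ card (A x \<union> A y)))"
proof -
  define avoid where "avoid = {E. \<forall>y\<in>F. \<not> A y \<subseteq> E}"
  define hit where "hit = avoid \<inter> {E. A x \<subseteq> E}"
  define D where "D = {E. \<forall>y\<in>F. A y \<inter> A x = {} \<longrightarrow> \<not> A y \<subseteq> E}"
  define c where "c = p ^ card (A x) - (\<Sum>y\<in>{y\<in>F. A x \<inter> A y \<noteq> {}}. p ^ card (A x \<union> A y))"
  have "avoid - {E. A x \<subseteq> E} = {E. \<forall>y\<in>insert x F. \<not> A y \<subseteq> E}"
    unfolding avoid_def by auto
  then have split: "bern_prob p P avoid
      = bern_prob p P hit + bern_prob p P {E. \<forall>y\<in>insert x F. \<not> A y \<subseteq> E}"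
    unfolding hit_def using bern_prob_split[of p P avoid "{E. A x \<subseteq> E}"] by simp
  have hit: "c * bern_prob p P D \<le> bern_prob p P hit"
    unfolding c_def D_def hit_def avoid_def by (rule janson_hit_lower_bound[OF P p F A])
  have "bern_prob p P {E. \<forall>y\<in>insert x F. \<not> A y \<subseteq> E} \<le> bern_prob p P avoid * (1 - c)"
  proof (cases "0 \<le> c")
    case True
    have "bern_prob p P avoid \<le> bern_prob p P D"
      unfolding avoid_def D_def by (rule bern_prob_mono[OF p]) auto
    then have "c * bern_prob p P avoid \<le> c * bern_prob p P D"
      using True by (rule mult_left_mono)
    then show ?thesis
      using split hit by (simp add: algebra_simps)
  next
    case False
    then have "bern_prob p P avoid \<le> bern_prob p P avoid * (1 - c)"
      using bern_prob_nonneg[OF p, of P avoid] by (simp add: mult_le_cancel_left1)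
    then show ?thesis
      using split bern_prob_nonneg[OF p, of P hit] by simp
  qed
  then show ?thesis
    unfolding avoid_def c_def by (simp add: algebra_simps)
qed

theorem janson_inequality:
  fixes A :: "'b \<Rightarrow> 'a set"
  assumes P: "finite P" and p: "0 \<le> p" "p \<le> 1" and F: "finite F" and A: "\<forall>x\<in>F. A x \<subseteq> P"
  shows "bern_prob p P {E. \<forall>x\<in>F. \<not> A x \<subseteq> E}
    \<le> exp (- (\<Sum>x\<in>F. p ^ card (A x)) +
           (\<Sum>x\<in>F. \<Sum>y\<in>{y\<in>F. y \<noteq> x \<and> A x \<inter> A y \<noteq> {}}. p ^ card (A x \<union> A y)))"
  using F A
proof (induction F rule: finite_induct)
  case empty
  then show ?case using bern_prob_UNIV[OF P] by simp
next
  case (insert x F)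
  define \<mu> where "\<mu> = p ^ card (A x)"
  define \<delta> where "\<delta> = (\<Sum>y\<in>{y\<in>F. A x \<inter> A y \<noteq> {}}. p ^ card (A x \<union> A y))"
  define \<Delta> where "\<Delta> = (\<lambda>F. \<Sum>z\<in>F. \<Sum>y\<in>{y\<in>F. y \<noteq> z \<and> A z \<inter> A y \<noteq> {}}. p ^ card (A z \<union> A y))"
  have "\<Delta> F \<le> (\<Sum>z\<in>F. \<Sum>y\<in>{y\<in>insert x F. y \<noteq> z \<and> A z \<inter> A y \<noteq> {}}. p ^ card (A z \<union> A y))"
    unfolding \<Delta>_def using insert.hyps(1) p by (intro sum_mono sum_mono2) auto
  moreover have "{y\<in>insert x F. y \<noteq> x \<and> A x \<inter> A y \<noteq> {}} = {y\<in>F. A x \<inter> A y \<noteq> {}}"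
    using insert.hyps(2) by auto
  ultimately have \<Delta>_insert: "\<Delta> F + \<delta> \<le> \<Delta> (insert x F)"
    unfolding \<Delta>_def \<delta>_def using insert.hyps by simp
  have factor: "0 \<le> 1 - \<mu> + \<delta>"
    using p unfolding \<mu>_def \<delta>_def by (simp add: power_le_one sum_nonneg add_increasing2)
  have "bern_prob p P {E. \<forall>y\<in>insert x F. \<not> A y \<subseteq> E}
      \<le> bern_prob p P {E. \<forall>y\<in>F. \<not> A y \<subseteq> E} * (1 - \<mu> + \<delta>)"
    unfolding \<mu>_def \<delta>_def using insert.prems insert.hyps(1) by (intro janson_step[OF P p]) auto
  also have "\<dots> \<le> exp (- (\<Sum>x\<in>F. p ^ card (A x)) + \<Delta> F) * exp (- \<mu> + \<delta>)"
  proof (rule mult_mono)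
    show "1 - \<mu> + \<delta> \<le> exp (- \<mu> + \<delta>)"
      using exp_ge_add_one_self[of "- \<mu> + \<delta>"] by linarith
  qed (use insert.IH insert.prems factor in \<open>auto simp: \<Delta>_def bern_prob_nonneg[OF p]\<close>)
  also have "\<dots> \<le> exp (- (\<Sum>x\<in>insert x F. p ^ card (A x)) + \<Delta> (insert x F))"
    using \<Delta>_insert insert.hyps by (simp add: \<mu>_def flip: exp_add)
  finally show ?case unfolding \<Delta>_def .
qed

lemma finite_vertex_pairs: "finite (vertex_pairs n)"
  unfolding vertex_pairs_def by (rule finite_subset[of _ "Pow {..<n}"]) auto

lemma pmf_gnp:
  assumes "0 \<le> p" "p \<le> 1"
  shows "pmf (gnp n p) E
           = (if E \<subseteq> vertex_pairs n then bern_weight p (vertex_pairs n) E else 0)"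
proof -
  define P where "P = vertex_pairs n"
  define PI where "PI = Pi_pmf P False (\<lambda>_. bernoulli_pmf p)"
  define g where "g = (\<lambda>f. {e \<in> P. f (e::nat set)})"
  have gnp: "gnp n p = map_pmf g PI"
    unfolding gnp_def P_def PI_def g_def ..
  show ?thesis
  proof (cases "E \<subseteq> P")
    case False
    then have "g -` {E} = {}" unfolding g_def by auto
    then show ?thesis using False unfolding gnp P_def[symmetric] by (simp add: pmf_map)
  next
    case True
    define chi where "chi = (\<lambda>e. e \<in> E)"
    have "f \<in> g -` {E} \<longleftrightarrow> f = chi" if "f \<in> set_pmf PI" for f
    proof -
      have "\<forall>x. x \<notin> P \<longrightarrow> f x = False"
        using that set_Pi_pmf_subset[OF finite_vertex_pairs, of n False] unfolding PI_def P_def by blast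
      then show ?thesis using True unfolding g_def chi_def by (auto simp: fun_eq_iff)
    qed
    then have "g -` {E} \<inter> set_pmf PI = {chi} \<inter> set_pmf PI" by blast
    then have "pmf (gnp n p) E = pmf PI chi"
      unfolding gnp pmf_map by (metis measure_Int_set_pmf measure_pmf_single)
    also have "\<dots> = (\<Prod>x\<in>P. pmf (bernoulli_pmf p) (chi x))"
      unfolding PI_def using True finite_vertex_pairs by (subst pmf_Pi) (auto simp: chi_def P_def)
    also have "\<dots> = bern_weight p P E"
      unfolding bern_weight_def chi_def using assms by (intro prod.cong) auto
    finally show ?thesis using True unfolding P_def by simp
  qed
qed

lemma set_pmf_gnp: "0 \<le> p \<Longrightarrow> p \<le> 1 \<Longrightarrow> set_pmf (gnp n p) \<subseteq> Pow (vertex_pairs n)"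
  using pmf_gnp[of p n] by (auto simp: set_pmf_iff split: if_splits)

lemma prob_gnp:
  assumes "0 \<le> p" "p \<le> 1"
  shows "measure_pmf.prob (gnp n p) X = bern_prob p (vertex_pairs n) X"
proof -
  have "X \<inter> set_pmf (gnp n p) = (X \<inter> Pow (vertex_pairs n)) \<inter> set_pmf (gnp n p)"
    using set_pmf_gnp[OF assms] by blast
  then have "measure_pmf.prob (gnp n p) X = measure_pmf.prob (gnp n p) (X \<inter> Pow (vertex_pairs n))"
    by (metis measure_Int_set_pmf)
  also have "\<dots> = (\<Sum>E\<in>X \<inter> Pow (vertex_pairs n). pmf (gnp n p) E)"
    using finite_vertex_pairs by (intro measure_measure_pmf_finite) auto
  also have "\<dots> = bern_prob p (vertex_pairs n) X"
    unfolding bern_prob_def pmf_gnp[OF assms] using finite_vertex_pairs[of n]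
    by (simp add: sum.inter_restrict[symmetric] Int_commute)
  finally show ?thesis .
qed

lemma expectation_gnp:
  assumes "0 \<le> p" "p \<le> 1"
  shows "measure_pmf.expectation (gnp n p) f
           = (\<Sum>E\<in>Pow (vertex_pairs n). f E * bern_weight p (vertex_pairs n) E)"
proof -
  have "measure_pmf.expectation (gnp n p) f = (\<Sum>E\<in>Pow (vertex_pairs n). f E * pmf (gnp n p) E)"
    by (rule integral_measure_pmf_real) (use finite_vertex_pairs set_pmf_gnp[OF assms] in auto)
  then show ?thesis
    by (simp add: pmf_gnp[OF assms])
qed

definition pairs :: "'a set \<Rightarrow> 'a set set" where
  "pairs S = {e. e \<subseteq> S \<and> card e = 2}"

lemma vertex_pairs_eq_pairs: "vertex_pairs n = pairs {..<n}"
  unfolding vertex_pairs_def pairs_def ..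

lemma is_clique_iff_pairs_subset: "is_clique E S \<longleftrightarrow> pairs S \<subseteq> E"
  unfolding is_clique_def pairs_def by auto

lemma pairs_mono: "S \<subseteq> T \<Longrightarrow> pairs S \<subseteq> pairs T"
  unfolding pairs_def by auto

lemma pairs_Int: "pairs S \<inter> pairs T = pairs (S \<inter> T)"
  unfolding pairs_def by auto

lemma finite_pairs: "finite S \<Longrightarrow> finite (pairs S)"
  unfolding pairs_def by (rule finite_subset[of _ "Pow S"]) auto

lemma card_pairs: "finite S \<Longrightarrow> card (pairs S) = card S choose 2"
  unfolding pairs_def by (rule n_subsets)

lemma card_pairs_Un:
  assumes "finite S" "finite T" "card S = k" "card T = k"
  shows "card (pairs S \<union> pairs T) = 2 * (k choose 2) - (card (S \<inter> T) choose 2)"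
proof -
  have "card (pairs S) + card (pairs T) = card (pairs S \<union> pairs T) + card (pairs S \<inter> pairs T)"
    using assms by (intro card_Un_Int finite_pairs)
  then show ?thesis
    using assms by (simp add: pairs_Int card_pairs)
qed

lemma card_Int_of_overlapping_sets:
  assumes "finite S" "finite T" "card S = k" "card T = k" "S \<noteq> T" "pairs S \<inter> pairs T \<noteq> {}"
  shows "card (S \<inter> T) \<in> {2..<k}"
proof -
  have "finite (pairs (S \<inter> T))" "pairs (S \<inter> T) \<noteq> {}"
    using assms(1,6) by (simp_all add: finite_pairs pairs_Int)
  then have "card (S \<inter> T) choose 2 \<noteq> 0"
    using assms(1) card_pairs[of "S \<inter> T"] by (metis card_0_eq finite_Int)
  then have "2 \<le> card (S \<inter> T)" by simp
  moreover have "card (S \<inter> T) < k"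
  proof (rule ccontr)
    assume "\<not> card (S \<inter> T) < k"
    then have "S \<inter> T = S" "S \<inter> T = T"
      using assms(1-4) by (metis Int_lower1 Int_lower2 card_mono card_seteq not_less)+
    then show False using assms(5) by simp
  qed
  ultimately show ?thesis by simp
qed

lemma card_subsets_with_Int_card_le:
  assumes "finite U" "finite S"
  shows "card {T. T \<subseteq> U \<and> card T = k \<and> card (S \<inter> T) = j}
           \<le> (card S choose j) * (card U choose (k - j))"
proof -
  let ?A = "{T. T \<subseteq> U \<and> card T = k \<and> card (S \<inter> T) = j}"
  let ?B = "{J. J \<subseteq> S \<and> card J = j} \<times> {R. R \<subseteq> U \<and> card R = k - j}"
  have "inj_on (\<lambda>T. (S \<inter> T, T - S)) ?A"
    by (rule inj_onI) blast
  moreover have "(\<lambda>T. (S \<inter> T, T - S)) ` ?A \<subseteq> ?B"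
  proof safe
    fix T assume T: "T \<subseteq> U" "k = card T" "j = card (S \<inter> T)"
    have "finite T" using T(1) assms(1) finite_subset by blast
    then show "card (T - S) = card T - card (S \<inter> T)"
      by (simp add: card_Diff_subset_Int Int_commute)
  qed auto
  ultimately have "card ?A \<le> card ?B"
    using assms by (intro card_inj_on_le) auto
  also have "\<dots> = (card S choose j) * (card U choose (k - j))"
    using assms by (simp add: card_cartesian_product n_subsets)
  finally show ?thesis .
qed

text \<open>Bound for the contribution of a fixed \<open>k\<close>-subset of an \<open>m\<close>-set to Janson's \<open>\<Delta>\<close>, where the
  summand with index \<open>j\<close> accounts for the \<open>k\<close>-subsets meeting it in exactly \<open>j\<close> vertices.\<close>

definition overlap_sum :: "nat \<Rightarrow> nat \<Rightarrow> real \<Rightarrow> real" where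
  "overlap_sum k m p = (\<Sum>j\<in>{2..<k}. real ((k choose j) * (m choose (k - j)))
                                        * p ^ (2 * (k choose 2) - (j choose 2)))"

lemma sum_overlapping_pairs_le:
  fixes p :: real
  assumes p: "0 \<le> p" and U: "finite U" and S: "S \<subseteq> U" "card S = k"
  defines "G \<equiv> {T \<in> {T. T \<subseteq> U \<and> card T = k}. T \<noteq> S \<and> pairs S \<inter> pairs T \<noteq> {}}"
  shows "(\<Sum>T\<in>G. p ^ card (pairs S \<union> pairs T)) \<le> overlap_sum k (card U) p"
proof -
  define h where "h = (\<lambda>j. p ^ (2 * (k choose 2) - (j choose 2)))"
  define c where "c = (\<lambda>T. card (S \<inter> T))"
  have fin: "finite S" "finite G" "\<And>T. T \<in> G \<Longrightarrow> finite T"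
    using S U finite_subset unfolding G_def by (auto intro: finite_subset[of _ "Pow U"])
  have card_G: "card {T\<in>G. c T = j} \<le> (k choose j) * (card U choose (k - j))" for j
  proof -
    have "card {T\<in>G. c T = j} \<le> card {T. T \<subseteq> U \<and> card T = k \<and> card (S \<inter> T) = j}"
      using U by (intro card_mono) (auto simp: G_def c_def intro: finite_subset[of _ "Pow U"])
    then show ?thesis
      using card_subsets_with_Int_card_le[OF U fin(1), of k j] S(2) by simp
  qed
  have "(\<Sum>T\<in>G. p ^ card (pairs S \<union> pairs T)) = (\<Sum>T\<in>G. h (c T))"
  proof (rule sum.cong)
    fix T assume "T \<in> G"
    then show "p ^ card (pairs S \<union> pairs T) = h (c T)"
      using card_pairs_Un[OF fin(1) fin(3) S(2)] unfolding G_def h_def c_def by simp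
  qed simp
  also have "\<dots> = (\<Sum>j\<in>c ` G. \<Sum>T\<in>{T\<in>G. c T = j}. h (c T))"
    by (rule sum.image_gen[OF fin(2)])
  also have "\<dots> = (\<Sum>j\<in>c ` G. real (card {T\<in>G. c T = j}) * h j)"
    by (rule sum.cong) auto
  also have "\<dots> \<le> (\<Sum>j\<in>{2..<k}. real (card {T\<in>G. c T = j}) * h j)"
  proof (rule sum_mono2)
    show "c ` G \<subseteq> {2..<k}"
    proof clarify
      fix T assume T: "T \<in> G"
      then have "card T = k" "S \<noteq> T" "pairs S \<inter> pairs T \<noteq> {}"
        unfolding G_def by auto
      then show "c T \<in> {2..<k}"
        unfolding c_def using card_Int_of_overlapping_sets fin(1) fin(3)[OF T] S(2) by blast
    qed
  qed (use p in \<open>auto simp: h_def\<close>)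
  also have "\<dots> \<le> (\<Sum>j\<in>{2..<k}. real ((k choose j) * (card U choose (k - j))) * h j)"
    using card_G p by (intro sum_mono mult_right_mono) (auto simp: h_def simp flip: of_nat_mult)
  finally show ?thesis
    unfolding overlap_sum_def h_def .
qed

lemma expectation_num_cliques:
  assumes "0 \<le> p" "p \<le> 1"
  shows "measure_pmf.expectation (gnp n p) (\<lambda>E. real (num_cliques n E m))
           = real (n choose m) * p ^ (m choose 2)"
proof -
  define K where "K = {S. S \<subseteq> {..<n} \<and> card S = m}"
  define P where "P = vertex_pairs n"
  have fin: "finite K" "finite P"
    unfolding K_def P_def by (auto intro: finite_subset[of _ "Pow {..<n}"] finite_vertex_pairs)
  have count: "real (num_cliques n E m) = (\<Sum>S\<in>K. if pairs S \<subseteq> E then 1 else 0)" for E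
  proof -
    have "{S. S \<subseteq> {..<n} \<and> card S = m \<and> is_clique E S} = {S \<in> K. pairs S \<subseteq> E}"
      by (auto simp: K_def is_clique_iff_pairs_subset)
    then show ?thesis
      unfolding num_cliques_def
      using sum.inter_filter[OF fin(1), of "\<lambda>_. 1::real" "\<lambda>S. pairs S \<subseteq> E"] by simp
  qed
  have "measure_pmf.expectation (gnp n p) (\<lambda>E. real (num_cliques n E m))
      = (\<Sum>S\<in>K. \<Sum>E\<in>Pow P. if pairs S \<subseteq> E then bern_weight p P E else 0)"
    unfolding expectation_gnp[OF assms] count P_def[symmetric] sum_distrib_right
    by (subst sum.swap) (auto intro!: sum.cong)
  also have "\<dots> = (\<Sum>S\<in>K. p ^ (m choose 2))"
  proof (rule sum.cong)
    fix S assume S: "S \<in> K"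
    then have "pairs S \<subseteq> P" "finite S"
      unfolding K_def P_def vertex_pairs_eq_pairs
      using pairs_mono[of S "{..<n}"] finite_subset[of S "{..<n}"] by auto
    then show "(\<Sum>E\<in>Pow P. if pairs S \<subseteq> E then bern_weight p P E else 0) = p ^ (m choose 2)"
      using bern_prob_superset[OF fin(2), of "pairs S" p] S
      by (simp add: bern_prob_def card_pairs K_def)
  qed simp
  finally show ?thesis
    unfolding K_def by (simp add: n_subsets)
qed

lemma prob_clique_free_le:
  assumes p: "0 \<le> p" "p \<le> 1" and U: "U \<subseteq> {..<n}"
  shows "measure_pmf.prob (gnp n p) {E. \<forall>S. S \<subseteq> U \<and> card S = k \<longrightarrow> \<not> is_clique E S}
           \<le> exp (- real (card U choose k) * (p ^ (k choose 2) - overlap_sum k (card U) p))"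
proof -
  define F where "F = {S. S \<subseteq> U \<and> card S = k}"
  have fU: "finite U" using U finite_subset by blast
  have fF: "finite F" unfolding F_def using fU by (auto intro: finite_subset[of _ "Pow U"])
  have sub: "\<forall>S\<in>F. pairs S \<subseteq> vertex_pairs n"
    unfolding F_def vertex_pairs_eq_pairs using U pairs_mono by (metis mem_Collect_eq subset_trans)
  have \<mu>: "(\<Sum>S\<in>F. p ^ card (pairs S)) = real (card U choose k) * p ^ (k choose 2)"
  proof -
    have "(\<Sum>S\<in>F. p ^ card (pairs S)) = (\<Sum>S\<in>F. p ^ (k choose 2))"
    proof (rule sum.cong)
      fix S assume "S \<in> F"
      then have "finite S" "card S = k"
        using fU by (auto simp: F_def intro: finite_subset)
      then show "p ^ card (pairs S) = p ^ (k choose 2)" by (simp add: card_pairs)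
    qed simp
    then show ?thesis unfolding F_def using fU by (simp add: n_subsets)
  qed
  have \<Delta>: "(\<Sum>S\<in>F. \<Sum>T\<in>{T\<in>F. T \<noteq> S \<and> pairs S \<inter> pairs T \<noteq> {}}. p ^ card (pairs S \<union> pairs T))
      \<le> real (card U choose k) * overlap_sum k (card U) p"
  proof -
    have "(\<Sum>S\<in>F. \<Sum>T\<in>{T\<in>F. T \<noteq> S \<and> pairs S \<inter> pairs T \<noteq> {}}. p ^ card (pairs S \<union> pairs T))
        \<le> (\<Sum>S\<in>F. overlap_sum k (card U) p)"
      unfolding F_def using p fU by (intro sum_mono sum_overlapping_pairs_le) auto
    then show ?thesis unfolding F_def using fU by (simp add: n_subsets)
  qed
  have event: "{E. \<forall>S. S \<subseteq> U \<and> card S = k \<longrightarrow> \<not> is_clique E S} = {E. \<forall>S\<in>F. \<not> pairs S \<subseteq> E}"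
    by (auto simp: F_def is_clique_iff_pairs_subset)
  have "measure_pmf.prob (gnp n p) {E. \<forall>S. S \<subseteq> U \<and> card S = k \<longrightarrow> \<not> is_clique E S}
      \<le> exp (- (\<Sum>S\<in>F. p ^ card (pairs S))
             + (\<Sum>S\<in>F. \<Sum>T\<in>{T\<in>F. T \<noteq> S \<and> pairs S \<inter> pairs T \<noteq> {}}. p ^ card (pairs S \<union> pairs T)))"
    unfolding prob_gnp[OF p] event by (rule janson_inequality[OF finite_vertex_pairs p fF sub])
  also have "\<dots> \<le> exp (- real (card U choose k) * (p ^ (k choose 2) - overlap_sum k (card U) p))"
    using \<Delta> unfolding \<mu> by (simp add: algebra_simps)
  finally show ?thesis .
qed

lemma two_mult_choose_two: "2 * (n choose 2) = n * (n - 1)"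
proof -
  have "even (n * (n - 1))" by (cases "even n") auto
  then show ?thesis by (simp add: choose_two)
qed

lemma overlap_exponent_le:
  assumes "2 \<le> j" "j + 1 \<le> k"
  shows "k * (2 * k - j) + j * (j - 1) \<le> 2 * (k * (k - 1)) + (2::nat)"
proof -
  define a where "a = j - 2"
  define b where "b = k - j - 1"
  have j: "j = a + 2" and k: "k = a + 3 + b" using assms unfolding a_def b_def by auto
  have s1: "2 * k - j = a + 4 + 2 * b" "k - 1 = a + 2 + b" "j - 1 = a + 1" unfolding j k by auto
  have "2 * (k * (k - 1)) + 2 = k * (2 * k - j) + j * (j - 1) + a * b"
    unfolding s1 unfolding j k by (simp add: algebra_simps)
  then show ?thesis by simp
qed

lemma eight_mult_pow4_le_twenty_pow: "4 \<le> k \<Longrightarrow> 8 * k ^ 4 \<le> (20::nat) ^ (k - 1)"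
proof (induction k rule: dec_induct)
  case base then show ?case by simp
next
  case (step k)
  have "8 * (Suc k) ^ 4 \<le> 20 * (8 * k ^ 4)"
  proof -
    have "Suc k \<le> 2 * k" using step(1) by simp
    then have "(Suc k) ^ 4 \<le> (2 * k) ^ 4" by (rule power_mono) simp
    also have "\<dots> = 16 * k ^ 4" by (simp add: power_mult_distrib)
    finally show ?thesis by simp
  qed
  also have "\<dots> \<le> 20 * 20 ^ (k - 1)" using step by simp
  also have "\<dots> = 20 ^ (Suc k - 1)" using step(1) by (cases k) auto
  finally show ?case .
qed

lemma clique_count_constant_le:
  assumes "3 \<le> k"
  shows "5 * (2 * k ^ 2) ^ k \<le> 4 * (20::nat) ^ (k choose 2)"
proof (cases "k = 3")
  case True
  have "3 choose 2 = (3::nat)" by (simp add: choose_two)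
  then show ?thesis using True by simp
next
  case False
  then have k4: "4 \<le> k" using assms by simp
  have q1: "((2 * k ^ 2) ^ k) ^ 2 = ((2 * k ^ 2) ^ 2) ^ k" unfolding power_mult[symmetric] by (simp only: mult.commute)
  have q2: "(2 * k ^ 2) ^ 2 = 4 * k ^ 4" by (simp add: power_mult_distrib power_mult[symmetric])
  have "(4 * (2 * k ^ 2) ^ k) ^ 2 = 4 ^ 2 * ((2 * k ^ 2) ^ k) ^ 2" by (rule power_mult_distrib)
  also have "\<dots> = 16 * (4 * k ^ 4) ^ k" unfolding q1 q2 by simp
  also have "\<dots> \<le> 2 ^ k * (4 * k ^ 4) ^ k"
  proof -
    have "(16::nat) = 2 ^ 4" by simp
    also have "\<dots> \<le> 2 ^ k" using k4 by (intro power_increasing) auto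
    finally show ?thesis by simp
  qed
  also have "\<dots> = (2 * (4 * k ^ 4)) ^ k" by (rule power_mult_distrib[symmetric])
  also have "\<dots> = (8 * k ^ 4) ^ k" by simp
  also have "\<dots> \<le> (20 ^ (k - 1)) ^ k" by (rule power_mono[OF eight_mult_pow4_le_twenty_pow[OF k4]]) simp
  also have "\<dots> = 20 ^ ((k - 1) * k)" by (rule power_mult[symmetric])
  also have "(k - 1) * k = (k choose 2) * 2" using two_mult_choose_two[of k] by (simp only: mult.commute)
  also have "(20::nat) ^ ((k choose 2) * 2) = (20 ^ (k choose 2)) ^ 2" by (rule power_mult)
  finally have "4 * (2 * k ^ 2) ^ k \<le> 20 ^ (k choose 2)"
    by (rule power2_le_imp_le) simp
  then show ?thesis by simp
qed

lemma four_mult_le_two_pow_Suc: "3 \<le> k \<Longrightarrow> 4 * k \<le> (2::nat) ^ (k + 1)"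
proof (induction k rule: dec_induct)
  case base then show ?case by simp
next
  case (step k) then show ?case by simp
qed

lemma overlap_constant_le:
  assumes "3 \<le> k"
  shows "4 * k * 2 ^ k * 20 ^ (k * (k - 1)) \<le> (2::nat) ^ (15 * k * (k - 2))"
proof -
  have "(20::nat) ^ (k * (k - 1)) \<le> 32 ^ (k * (k - 1))" by (rule power_mono) auto
  also have "\<dots> = 2 ^ (5 * (k * (k - 1)))" by (simp add: power_mult)
  finally have a: "(20::nat) ^ (k * (k - 1)) \<le> 2 ^ (5 * (k * (k - 1)))" .
  have "4 * k * 2 ^ k * 20 ^ (k * (k - 1)) \<le> 2 ^ (k + 1) * 2 ^ k * 2 ^ (5 * (k * (k - 1)))"
    using four_mult_le_two_pow_Suc[OF assms] a by (intro mult_mono) auto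
  also have "\<dots> = 2 ^ (k + 1 + k + 5 * (k * (k - 1)))" by (simp add: power_add)
    (simp add: power_add[symmetric] mult_2)
  also have "\<dots> \<le> 2 ^ (15 * k * (k - 2))"
  proof (rule power_increasing)
    define b where "b = k - 3"
    have k: "k = b + 3" using assms unfolding b_def by auto
    have s1: "k - 1 = b + 2" "k - 2 = b + 1" unfolding k by auto
    have "15 * k * (k - 2) = k + 1 + k + 5 * (k * (k - 1)) + (10 * b * b + 33 * b + 8)"
      unfolding s1 unfolding k by (simp add: algebra_simps)
    then show "k + 1 + k + 5 * (k * (k - 1)) \<le> 15 * k * (k - 2)" by simp
  qed simp
  finally show ?thesis .
qed

lemma overlap_term_le:
  fixes t :: real
  assumes t: "1 \<le> t" and m: "real m \<le> t ^ k" "k \<le> m" and j: "2 \<le> j" "j + 1 \<le> k"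
  shows "real (m choose k) * real ((k choose j) * (m choose (k - j)))
           * (20 / t\<^sup>2) ^ (2 * (k choose 2) - (j choose 2))
         \<le> 2 ^ k * 20 ^ (k * (k - 1)) * t\<^sup>2"
proof -
  define M where "M = real m"
  have M: "0 \<le> M" "M \<le> t ^ k" using m unfolding M_def by simp_all
  define c where "c = 2 * (k choose 2) - (j choose 2)"
  have kk: "2 * (k choose 2) = k * (k - 1)" by (rule two_mult_choose_two)
  have jj: "2 * (j choose 2) = j * (j - 1)" by (rule two_mult_choose_two)
  have cle: "c \<le> k * (k - 1)" unfolding c_def kk by simp
  have jle: "j choose 2 \<le> k * (k - 1)"
  proof -
    have "j choose 2 \<le> k choose 2" using j by (intro binomial_right_mono) simp
    then show ?thesis using kk by simp
  qed
  have c2: "2 * c = 2 * (k * (k - 1)) - j * (j - 1)" unfolding c_def kk[symmetric] jj[symmetric] by simp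
  have jj2: "j * (j - 1) \<le> 2 * (k * (k - 1))" using jle jj by linarith
  have ex: "k * (2 * k - j) \<le> 2 * c + 2"
    using overlap_exponent_le[OF j] c2 jj2 by linarith
  have tpos: "0 < t" using t by simp
  have A: "M ^ k * M ^ (k - j) \<le> t ^ (2 * c + 2)"
  proof -
    have e: "k + (k - j) = 2 * k - j" using j by simp
    have "M ^ k * M ^ (k - j) = M ^ (k + (k - j))" by (simp add: power_add)
    also have "\<dots> = M ^ (2 * k - j)" unfolding e ..
    finally have "M ^ k * M ^ (k - j) = M ^ (2 * k - j)" .
    also have "\<dots> \<le> (t ^ k) ^ (2 * k - j)" by (rule power_mono[OF M(2) M(1)])
    also have "\<dots> = t ^ (k * (2 * k - j))" by (simp add: power_mult)
    also have "\<dots> \<le> t ^ (2 * c + 2)" by (rule power_increasing[OF ex t])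
    finally show ?thesis .
  qed
  have B: "real (k choose j) \<le> 2 ^ k"
  proof -
    have "k choose j \<le> 2 ^ k" by (rule binomial_le_pow2)
    then show ?thesis by (metis of_nat_le_iff of_nat_numeral of_nat_power)
  qed
  have C: "(20::real) ^ c \<le> 20 ^ (k * (k - 1))" by (rule power_increasing[OF cle]) simp
  have "real (m choose k) \<le> M ^ k" "real (m choose (k - j)) \<le> M ^ (k - j)"
    using binomial_le_pow[OF m(2)] binomial_le_pow[of "k - j" m] m(2) unfolding M_def
    by (metis of_nat_le_iff of_nat_power, metis diff_le_self le_trans of_nat_le_iff of_nat_power)
  then have "real (m choose k) * real ((k choose j) * (m choose (k - j))) * (20 / t\<^sup>2) ^ c
      \<le> M ^ k * (real (k choose j) * M ^ (k - j)) * (20 / t\<^sup>2) ^ c"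
    using M by (intro mult_right_mono mult_mono) (auto intro: mult_left_mono)
  also have "\<dots> = real (k choose j) * (M ^ k * M ^ (k - j)) * 20 ^ c / t ^ (2 * c)"
    by (simp add: power_divide power_mult)
  also have "\<dots> \<le> 2 ^ k * t ^ (2 * c + 2) * 20 ^ (k * (k - 1)) / t ^ (2 * c)"
    by (intro divide_right_mono mult_mono A B C) (use M tpos in auto)
  also have "\<dots> = 2 ^ k * 20 ^ (k * (k - 1)) * t\<^sup>2"
    using tpos by (simp add: power_add power2_eq_square)
  finally show ?thesis unfolding c_def .
qed

lemma kth_root_facts:
  assumes k: "3 \<le> k" and n: "2 ^ (15 * k\<^sup>2) \<le> n"
  defines "t \<equiv> real n powr (1 / real k)"
  shows "0 < t" "t ^ k = real n" "real n powr (- 2 / real k) = 1 / t\<^sup>2" "2 ^ (15 * k) \<le> t"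
proof -
  have n1: "(1::nat) \<le> 2 ^ (15 * k\<^sup>2)" by simp
  have npos: "0 < real n" using n n1 by linarith
  show tpos: "0 < t" unfolding t_def using npos by simp
  have "t ^ k = real n powr (real k * (1 / real k))" unfolding t_def
    by (rule powr_power) (use npos in simp)
  also have "\<dots> = real n" using k npos by simp
  finally show "t ^ k = real n" .
  have "real n powr (- 2 / real k) = t powr (- 2)" unfolding t_def powr_powr by simp
  also have "\<dots> = inverse (t powr 2)" by (rule powr_minus)
  also have "t powr 2 = t\<^sup>2" using powr_realpow[OF tpos, of 2] by simp
  finally show "real n powr (- 2 / real k) = 1 / t\<^sup>2" by (simp add: divide_inverse)
  have "(2::real) ^ (15 * k) = 2 powr (real (15 * k\<^sup>2) * (1 / real k))"
  proof -
    have "real (15 * k\<^sup>2) * (1 / real k) = real (15 * k)" using k by (simp add: power2_eq_square)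
    then show ?thesis using powr_realpow[of 2 "15 * k"] by simp
  qed
  also have "\<dots> = (2 powr real (15 * k\<^sup>2)) powr (1 / real k)" by (simp add: powr_powr)
  also have "\<dots> = (2 ^ (15 * k\<^sup>2)) powr (1 / real k)" using powr_realpow[of 2 "15 * k\<^sup>2"] by simp
  also have "\<dots> \<le> t" unfolding t_def
    by (rule powr_mono2) (use n in \<open>auto simp del: of_nat_power simp: of_nat_power[symmetric]\<close>)
  finally show "2 ^ (15 * k) \<le> t" .
qed

lemma expected_cliques_in_set_ge:
  fixes t p :: real
  assumes k: "3 \<le> k" and t: "0 < t" and tk: "t ^ k = real n" and nm: "real n = 2 * real k * real m"
    and km: "k \<le> m" and p: "p = 20 / t\<^sup>2"
  shows "5 / 4 * real n \<le> real (m choose k) * p ^ (k choose 2)"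
proof -
  have kk: "2 * (k choose 2) = k * (k - 1)" by (rule two_mult_choose_two)
  have c2: "(5::real) * (2 * real k ^ 2) ^ k \<le> 4 * 20 ^ (k choose 2)"
    using clique_count_constant_le[OF k] by (metis (mono_tags) of_nat_le_iff of_nat_mult of_nat_numeral of_nat_power)
  have kpos: "0 < real k" using k by simp
  have mk: "real m / real k = t ^ k / (2 * real k ^ 2)"
    using tk nm kpos by (simp add: power2_eq_square field_simps)
  have "p ^ (k choose 2) = 20 ^ (k choose 2) / t ^ (k * (k - 1))"
    unfolding p kk[symmetric] by (simp add: power_divide power_mult)
  moreover have "(real m / real k) ^ k = t ^ (k * k) / (2 * real k ^ 2) ^ k"
    unfolding mk by (simp add: power_divide power_mult)
  moreover have "t ^ (k * k) = t ^ k * t ^ (k * (k - 1))"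
  proof -
    have "k * k = k + k * (k - 1)" using k by (cases k) auto
    then show ?thesis by (simp add: power_add)
  qed
  ultimately have XY: "(real m / real k) ^ k * p ^ (k choose 2) = t ^ k * (20 ^ (k choose 2) / (2 * real k ^ 2) ^ k)"
    using t by (simp add: field_simps)
  have XB: "(real m / real k) ^ k \<le> real (m choose k)" by (rule binomial_ge_n_over_k_pow_k[OF km])
  have R: "5 / 4 \<le> 20 ^ (k choose 2) / (2 * real k ^ 2) ^ k"
    using c2 kpos by (simp add: field_simps)
  have Y0: "0 \<le> p ^ (k choose 2)" unfolding p by simp
  have "5 / 4 * real n = t ^ k * (5 / 4)" using tk by simp
  also have "\<dots> \<le> t ^ k * (20 ^ (k choose 2) / (2 * real k ^ 2) ^ k)"
    by (rule mult_left_mono[OF R]) (use t in simp)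
  also have "\<dots> = (real m / real k) ^ k * p ^ (k choose 2)" using XY by simp
  also have "\<dots> \<le> real (m choose k) * p ^ (k choose 2)" by (rule mult_right_mono[OF XB Y0])
  finally show ?thesis .
qed

lemma overlap_sum_le:
  fixes t p :: real
  assumes k: "3 \<le> k" and t: "2 ^ (15 * k) \<le> t" and tk: "t ^ k = real n" and mn: "m \<le> n"
    and km: "k \<le> m" and p: "p = 20 / t\<^sup>2"
  shows "real (m choose k) * overlap_sum k m p \<le> real n / 4"
proof -
  define Z where "Z = (2::real) ^ k * 20 ^ (k * (k - 1)) * t\<^sup>2"
  have t1: "1 \<le> t" using one_le_power[of "2::real" "15 * k"] t by linarith
  have "real (m choose k) * overlap_sum k m p
      = (\<Sum>j\<in>{2..<k}. real (m choose k) * real ((k choose j) * (m choose (k - j)))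
                          * p ^ (2 * (k choose 2) - (j choose 2)))"
    unfolding overlap_sum_def by (simp add: sum_distrib_left mult.assoc)
  also have "\<dots> \<le> (\<Sum>j\<in>{2..<k}. Z)"
    unfolding Z_def p using t1 mn tk km by (intro sum_mono overlap_term_le) auto
  also have "\<dots> \<le> real k * Z"
    by (simp add: Z_def) (intro mult_right_mono; simp)
  also have "\<dots> \<le> real n / 4"
  proof -
    have "4 * real k * 2 ^ k * 20 ^ (k * (k - 1)) \<le> (2::real) ^ (15 * k * (k - 2))"
      using overlap_constant_le[OF k] by (metis (mono_tags) of_nat_le_iff of_nat_mult of_nat_numeral of_nat_power)
    also have "\<dots> = (2 ^ (15 * k)) ^ (k - 2)" by (simp add: power_mult)
    also have "\<dots> \<le> t ^ (k - 2)" by (rule power_mono[OF t]) simp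
    finally have "4 * real k * Z \<le> t ^ (k - 2) * t\<^sup>2"
      unfolding Z_def mult.assoc[symmetric] by (intro mult_right_mono) auto
    also have "\<dots> = t ^ (k - 2 + 2)"
      by (rule power_add[symmetric])
    also have "k - 2 + 2 = k"
      using k by simp
    finally show ?thesis
      using tk by simp
  qed
  finally show ?thesis .
qed

lemma edge_prob_le_one:
  fixes t :: real
  assumes "3 \<le> k" "2 ^ (15 * k) \<le> t"
  shows "0 \<le> 20 / t\<^sup>2" "20 / t\<^sup>2 \<le> 1"
proof -
  have "(20::real) \<le> 2 ^ 45" by simp
  also have "\<dots> \<le> 2 ^ (15 * k)" using assms(1) by (intro power_increasing) auto
  finally have "20 \<le> t" using assms(2) by linarith
  moreover have "t \<le> t\<^sup>2" using \<open>20 \<le> t\<close> by (intro self_le_power) auto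
  ultimately have "20 \<le> t\<^sup>2" by linarith
  then show "0 \<le> 20 / t\<^sup>2" "20 / t\<^sup>2 \<le> 1" by (simp_all add: divide_le_eq_1)
qed

lemma n_lower_bounds:
  assumes "3 \<le> k" "2 ^ (15 * k\<^sup>2) \<le> n"
  shows "2 * k * k < n" "10 \<le> n"
proof -
  have "2 * k * k \<le> 15 * k\<^sup>2" by (simp add: power2_eq_square)
  also have "\<dots> < 2 ^ (15 * k\<^sup>2)" by (rule less_exp)
  finally show "2 * k * k < n" using assms(2) by linarith
  moreover have "2 * 3 * 3 \<le> 2 * k * k" using assms(1) by (intro mult_mono) auto
  ultimately show "10 \<le> n" by linarith
qed

lemma three_mult_two_pow_lt_exp:
  assumes "10 \<le> n"
  shows "3 * 2 ^ n < exp (real n)"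
proof -
  have "3 < 1 + real n * (1 / 4)"
    using assms by simp
  also have "\<dots> \<le> (1 + 1 / 4) ^ n"
    by (rule Bernoulli_inequality) simp
  finally have "3 * 2 ^ n < (5 / 4) ^ n * (2::real) ^ n"
    by simp
  also have "\<dots> = (5 / 2) ^ n"
    by (simp flip: power_mult_distrib)
  also have "\<dots> \<le> exp 1 ^ n"
    using exp_lower_Taylor_quadratic[of 1] by (intro power_mono) simp_all
  also have "\<dots> = exp (real n)"
    by (simp flip: exp_of_nat_mult)
  finally show ?thesis .
qed

lemma prob_every_set_has_clique_gt:
  assumes p: "0 \<le> p" "p \<le> 1" and n: "10 \<le> n"
    and many: "real n \<le> real (m choose k) * (p ^ (k choose 2) - overlap_sum k m p)"
  shows "measure_pmf.prob (gnp n p)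
           {E. \<forall>U. U \<subseteq> {..<n} \<and> card U = m \<longrightarrow> (\<exists>S. S \<subseteq> U \<and> card S = k \<and> is_clique E S)}
         > 2 / 3"
proof -
  define Us where "Us = {U. U \<subseteq> {..<n} \<and> card U = m}"
  define bad where "bad U = {E. \<forall>S. S \<subseteq> U \<and> card S = k \<longrightarrow> \<not> is_clique E S}" for U
  have fin: "finite Us"
    unfolding Us_def by (rule finite_subset[of _ "Pow {..<n}"]) auto
  have "measure_pmf.prob (gnp n p) (\<Union>U\<in>Us. bad U) \<le> (\<Sum>U\<in>Us. measure_pmf.prob (gnp n p) (bad U))"
    using fin by (intro measure_pmf.finite_measure_subadditive_finite) auto
  also have "\<dots> \<le> (\<Sum>U\<in>Us. exp (- real n))"
  proof (rule sum_mono)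
    fix U assume "U \<in> Us"
    then have U: "U \<subseteq> {..<n}" "card U = m" by (simp_all add: Us_def)
    then have "measure_pmf.prob (gnp n p) (bad U)
        \<le> exp (- real (m choose k) * (p ^ (k choose 2) - overlap_sum k m p))"
      using prob_clique_free_le[OF p U(1), of k] unfolding bad_def by simp
    moreover have "- real (m choose k) * (p ^ (k choose 2) - overlap_sum k m p) \<le> - real n"
      using many by simp
    ultimately show "measure_pmf.prob (gnp n p) (bad U) \<le> exp (- real n)"
      by (meson exp_le_cancel_iff order_trans)
  qed
  also have "\<dots> = real (n choose m) * exp (- real n)"
    unfolding Us_def by (simp add: n_subsets)
  also have "\<dots> \<le> 2 ^ n * exp (- real n)"
  proof (rule mult_right_mono)
    show "real (n choose m) \<le> 2 ^ n"
      using binomial_le_pow2[of n m] by (metis of_nat_le_iff of_nat_numeral of_nat_power)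
  qed simp
  also have "\<dots> < 1 / 3"
    using three_mult_two_pow_lt_exp[OF n] by (simp add: exp_minus field_simps)
  finally have "measure_pmf.prob (gnp n p) (UNIV - (\<Union>U\<in>Us. bad U)) > 2 / 3"
    using measure_pmf.prob_compl[of "\<Union>U\<in>Us. bad U" "gnp n p"] by simp
  moreover have "UNIV - (\<Union>U\<in>Us. bad U)
      = {E. \<forall>U. U \<subseteq> {..<n} \<and> card U = m \<longrightarrow> (\<exists>S. S \<subseteq> U \<and> card S = k \<and> is_clique E S)}"
    unfolding Us_def bad_def by blast
  ultimately show ?thesis by simp
qed

lemma binomial_mult_clique_prob_le:
  fixes t p :: real
  assumes "0 < t" "t ^ k = real n" "p = 20 / t\<^sup>2"
  shows "real (n choose (k + 1)) * p ^ ((k + 1) choose 2) \<le> 20 ^ ((k + 1) choose 2)"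
proof (cases "k + 1 \<le> n")
  case True
  have "real n ^ (k + 1) = t ^ (k * (k + 1))"
    unfolding assms(2)[symmetric] by (rule power_mult[symmetric])
  also have "k * (k + 1) = 2 * ((k + 1) choose 2)"
    using two_mult_choose_two[of "k + 1"] by simp
  finally have "real n ^ (k + 1) = t ^ (2 * ((k + 1) choose 2))" .
  then have "real n ^ (k + 1) * p ^ ((k + 1) choose 2) = 20 ^ ((k + 1) choose 2)"
    using assms(1,3) by (simp add: power_divide power_mult)
  moreover have "real (n choose (k + 1)) \<le> real n ^ (k + 1)"
    using binomial_le_pow[OF True] by (metis of_nat_le_iff of_nat_power)
  ultimately show ?thesis
    using assms(3) by (metis mult_right_mono zero_le_divide_iff zero_le_numeral zero_le_power zero_le_power2)
next
  case False
  then show ?thesis by (simp add: binomial_eq_0)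
qed

theorem lemma2:
  fixes k n :: nat and p :: real
  assumes "k \<ge> 3"
    and "n \<ge> 2 ^ (15 * k\<^sup>2)"
    and "(2 * k) dvd n"
    and "p = 20 * real n powr (- 2 / real k)"
  shows "(measure_pmf.expectation (gnp n p) (\<lambda>E. real (num_cliques n E (k + 1)))
           \<le> 20 ^ ((k + 1) choose 2)) \<and>
         (measure_pmf.prob (gnp n p)
           {E. \<forall>U. U \<subseteq> {..<n} \<and> card U = n div (2 * k) \<longrightarrow>
                  (\<exists>S. S \<subseteq> U \<and> card S = k \<and> is_clique E S)} > 2 / 3)"
proof -
  define t where "t = real n powr (1 / real k)"
  define m where "m = n div (2 * k)"
  have t: "0 < t" "t ^ k = real n" "2 ^ (15 * k) \<le> t" and p: "p = 20 / t\<^sup>2"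
    using kth_root_facts[OF assms(1,2)] assms(4) unfolding t_def by auto
  have p01: "0 \<le> p" "p \<le> 1"
    using edge_prob_le_one[OF assms(1) t(3)] p by simp_all
  have n: "2 * k * k < n" "10 \<le> n"
    using n_lower_bounds[OF assms(1,2)] by simp_all
  have n_eq: "n = 2 * k * m"
    unfolding m_def using assms(3) by simp
  have km: "k \<le> m"
    using n(1) n_eq by (metis less_imp_le_nat mult_less_cancel1)
  have "5 / 4 * real n \<le> real (m choose k) * p ^ (k choose 2)"
    using n_eq by (intro expected_cliques_in_set_ge[OF assms(1) t(1,2) _ km p]) simp
  moreover have "real (m choose k) * overlap_sum k m p \<le> real n / 4"
    by (rule overlap_sum_le[OF assms(1) t(3,2) _ km p]) (simp add: m_def)
  ultimately have many: "real n \<le> real (m choose k) * (p ^ (k choose 2) - overlap_sum k m p)"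
    by (simp add: right_diff_distrib)
  show ?thesis
    using binomial_mult_clique_prob_le[OF t(1,2) p] prob_every_set_has_clique_gt[OF p01 n(2) many]
    by (simp add: expectation_num_cliques[OF p01] m_def)
qed

end
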